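(* Let $N\ge1$, $T>0$, and let $\alpha\in\mathcal U$ be an optimal control for the problem of minimizing $\int_0^T\mathbb V(t)\,dt$, $\mathbb V=\frac1N\sum_i\xi_i^2$, where $\dot\xi_i=-\xi_i+(1-\alpha_i)\bar\xi$, $\bar\xi=\frac1N\sum_j\xi_j$, with initial datum satisfying $\bar\xi(0)>0$ and $\xi_1(0)\ge\dots\ge\xi_N(0)$. Suppose there exist $\tau\in[0,T]$ and $i,j\in\{1,\dots,N\}$ with $\xi_i(\tau)=\xi_j(\tau)$. Then $\xi_i(t)=\xi_j(t)$ for all $t\in[\tau,T]$, and consequently $\alpha_i(t)=\alpha_j(t)$ for almost every $t\in[\tau,T]$.
   Context: $\mathcal U$ is the set of measurable $\alpha:[0,T]\to[0,1]^N$ with $\sum_i\alpha_i(t)\le1$ for all $t$. *)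

theory Defs
  imports "HOL-Analysis.Analysis"
begin

text \<open>States and controls are functions of time returning a vector indexed by
  \<open>{1..N}\<close> (values outside \<open>{1..N}\<close> are irrelevant).\<close>

definition admissible :: "nat \<Rightarrow> real \<Rightarrow> (real \<Rightarrow> nat \<Rightarrow> real) \<Rightarrow> bool" where
  "admissible N T \<beta> \<longleftrightarrow>
     (\<forall>i\<in>{1..N}. (\<lambda>t. \<beta> t i) \<in> borel_measurable (restrict_space lborel {0..T})) \<and>
     (\<forall>t\<in>{0..T}. (\<forall>i\<in>{1..N}. 0 \<le> \<beta> t i \<and> \<beta> t i \<le> 1) \<and> (\<Sum>i=1..N. \<beta> t i) \<le> 1)"

definition mean :: "nat \<Rightarrow> (nat \<Rightarrow> real) \<Rightarrow> real" where
  "mean N v = (1 / real N) * (\<Sum>j=1..N. v j)"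

definition Vfun :: "nat \<Rightarrow> (nat \<Rightarrow> real) \<Rightarrow> real" where
  "Vfun N v = (1 / real N) * (\<Sum>i=1..N. (v i)\<^sup>2)"

text \<open>Carath\'eodory solution of \<open>\<xi>_i' = -\<xi>_i + (1-\<beta>_i) mean \<xi>\<close> on [0,T]
  with initial datum \<open>\<xi>0\<close>, in integral form.\<close>
definition trajectory ::
  "nat \<Rightarrow> real \<Rightarrow> (real \<Rightarrow> nat \<Rightarrow> real) \<Rightarrow> (nat \<Rightarrow> real) \<Rightarrow> (real \<Rightarrow> nat \<Rightarrow> real) \<Rightarrow> bool" where
  "trajectory N T \<beta> \<xi>0 x \<longleftrightarrow>
     (\<forall>i\<in>{1..N}. continuous_on {0..T} (\<lambda>t. x t i)) \<and>
     (\<forall>i\<in>{1..N}. \<forall>t\<in>{0..T}.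
        x t i = \<xi>0 i + (LBINT s:{0..t}. (- x s i + (1 - \<beta> s i) * mean N (x s))))"

definition cost :: "nat \<Rightarrow> real \<Rightarrow> (real \<Rightarrow> nat \<Rightarrow> real) \<Rightarrow> real" where
  "cost N T x = (LBINT t:{0..T}. Vfun N (x t))"

definition optimal_control ::
  "nat \<Rightarrow> real \<Rightarrow> (nat \<Rightarrow> real) \<Rightarrow> (real \<Rightarrow> nat \<Rightarrow> real) \<Rightarrow> (real \<Rightarrow> nat \<Rightarrow> real) \<Rightarrow> bool" where
  "optimal_control N T \<xi>0 \<alpha> x \<longleftrightarrow>
     admissible N T \<alpha> \<and> trajectory N T \<alpha> \<xi>0 x \<and>
     (\<forall>\<beta> y. admissible N T \<beta> \<and> trajectory N T \<beta> \<xi>0 y \<longrightarrow> cost N T x \<le> cost N T y)"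

end

theory Submission
  imports Defs
begin

text \<open>
  If \<open>\<xi>\<^sub>i(\<tau>) = \<xi>\<^sub>j(\<tau>)\<close>, replace both \<open>\<xi>\<^sub>i, \<xi>\<^sub>j\<close> and \<open>\<alpha>\<^sub>i, \<alpha>\<^sub>j\<close> by their averages from time
  \<open>\<tau>\<close> on. The averaged control is admissible, and since the dynamics is affine in
  \<open>(\<xi>\<^sub>k, \<alpha>\<^sub>k)\<close> and averaging leaves \<open>\<xi>\<close>'s mean unchanged, the averaged state is its
  trajectory. Its running cost is smaller by \<open>(\<xi>\<^sub>i - \<xi>\<^sub>j)\<^sup>2 / (2N)\<close> after \<open>\<tau>\<close>, so
  optimality forces \<open>\<xi>\<^sub>i = \<xi>\<^sub>j\<close> on \<open>[\<tau>, T]\<close>. Then \<open>\<xi>\<^sub>j - \<xi>\<^sub>i\<close> has zero increments there,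
  so its derivative \<open>(\<alpha>\<^sub>i - \<alpha>\<^sub>j) mean \<xi>\<close> vanishes almost everywhere; and the mean stays
  positive, as it decays at a rate of at most itself.
\<close>

lemma set_integrable_bounded_Icc:
  fixes f :: "real \<Rightarrow> real"
  assumes "f \<in> borel_measurable (restrict_space lborel {a..b})"
    and "\<And>t. t \<in> {a..b} \<Longrightarrow> \<bar>f t\<bar> \<le> B"
  shows "set_integrable lborel {a..b} f"
  unfolding set_integrable_def
proof (rule integrableI_bounded_set[where A="{a..b}" and B=B])
  show "(\<lambda>t. indicat_real {a..b} t *\<^sub>R f t) \<in> borel_measurable lborel"
    using assms(1) by (subst (asm) borel_measurable_restrict_space_iff) auto
qed (use assms(2) in \<open>auto simp: emeasure_lborel_Icc_eq\<close>)

lemma continuous_on_if_ge: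
  fixes f g :: "real \<Rightarrow> 'a::topological_space"
  assumes f: "continuous_on S f" and g: "continuous_on S g" and meet: "f \<tau> = g \<tau>"
  shows "continuous_on S (\<lambda>t. if \<tau> \<le> t then g t else f t)"
proof -
  have "continuous_on S (\<lambda>t. if t \<le> \<tau> then f t else g t)"
    by (rule continuous_on_cases_le[where h="\<lambda>t. t"])
      (auto intro: continuous_on_subset[OF f] continuous_on_subset[OF g] continuous_on_id meet)
  moreover have "(\<lambda>t. if t \<le> \<tau> then f t else g t) = (\<lambda>t. if \<tau> \<le> t then g t else f t)"
    using meet by (auto simp: fun_eq_iff)
  ultimately show ?thesis by metis
qed

lemma integral_equation_glue:
  fixes f g u w :: "real \<Rightarrow> real"
  assumes f: "f integrable_on {0..T}" and g: "g integrable_on {0..T}"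
    and u: "\<And>t. t \<in> {0..T} \<Longrightarrow> u t = a + integral {0..t} f"
    and w: "\<And>t. t \<in> {0..T} \<Longrightarrow> w t = b + integral {0..t} g"
    and \<tau>: "\<tau> \<in> {0..T}" and meet: "u \<tau> = w \<tau>" and t: "t \<in> {0..T}"
  shows "(if \<tau> \<le> t then w t else u t) = a + integral {0..t} (\<lambda>s. if \<tau> \<le> s then g s else f s)"
proof (cases "\<tau> \<le> t")
  case False
  then have "integral {0..t} (\<lambda>s. if \<tau> \<le> s then g s else f s) = integral {0..t} f"
    by (intro integral_cong) auto
  with False u t show ?thesis by simp
next
  case True
  let ?h = "\<lambda>s. if \<tau> \<le> s then g s else f s"
  have f\<tau>: "f integrable_on {0..\<tau>}"
    by (rule integrable_subinterval_real[OF f]) (use \<tau> in auto)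
  have gt: "g integrable_on {\<tau>..t}" and g0: "g integrable_on {0..t}"
    by (rule integrable_subinterval_real[OF g], use \<tau> t in auto)+
  have h\<tau>: "integral {0..\<tau>} ?h = integral {0..\<tau>} f"
    by (rule integral_spike[OF negligible_sing[of \<tau>]]) auto
  have ht: "integral {\<tau>..t} ?h = integral {\<tau>..t} g"
    by (intro integral_cong) auto
  have "?h integrable_on {0..\<tau>}"
    by (rule integrable_spike[OF f\<tau> negligible_sing[of \<tau>]]) auto
  moreover have "?h integrable_on {\<tau>..t}"
    by (rule integrable_eq[OF gt]) auto
  ultimately have "?h integrable_on {0..t}"
    using \<tau> True by (meson Henstock_Kurzweil_Integration.integrable_combine atLeastAtMost_iff)
  then have "integral {0..t} ?h = integral {0..\<tau>} f + integral {\<tau>..t} g"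
    using \<tau> True h\<tau> ht Henstock_Kurzweil_Integration.integral_combine[of 0 \<tau> t ?h] by simp
  moreover have "integral {0..t} g = integral {0..\<tau>} g + integral {\<tau>..t} g"
    using \<tau> True Henstock_Kurzweil_Integration.integral_combine[OF _ _ g0] by simp
  ultimately show ?thesis
    using True u[OF \<tau>] w[OF \<tau>] w[OF t] meet by simp
qed

lemma AE_zero_if_interval_integrals_zero:
  fixes f :: "real \<Rightarrow> real"
  assumes f: "set_integrable lborel {a..b} f"
    and zero: "\<And>c d. a \<le> c \<Longrightarrow> c \<le> d \<Longrightarrow> d \<le> b \<Longrightarrow> integral {c..d} f = 0"
  shows "AE t in lborel. t \<in> {a..b} \<longrightarrow> f t = 0"
proof -
  define g where "g t = indicator {a..b} t *\<^sub>R f t" for t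
  have g: "integrable lborel g"
    using f unfolding set_integrable_def g_def .
  have g_Icc: "(LINT t:{c..d}|lborel. g t) = 0" for c d
  proof -
    have "(LINT t:{c..d}|lborel. g t) = (LINT t:{max a c..min b d}|lborel. f t)"
      unfolding set_lebesgue_integral_def g_def
      by (intro Bochner_Integration.integral_cong) (auto split: split_indicator)
    also have "\<dots> = 0"
    proof (cases "max a c \<le> min b d")
      case True
      have "set_integrable lborel {max a c..min b d} f"
        by (rule set_integrable_subset[OF f]) auto
      then show ?thesis
        using set_borel_integral_eq_integral(2) zero[of "max a c" "min b d"] True by fastforce
    qed (simp add: set_lebesgue_integral_def)
    finally show ?thesis .
  qed
  have "(\<lambda>t. indicator {a..b} t *\<^sub>R g t) = g"
    by (auto simp: g_def fun_eq_iff split: split_indicator)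
  then have total: "(LINT t|lborel. g t) = 0"
    using g_Icc[of a b] unfolding set_lebesgue_integral_def by simp
  have "AE t in lborel. g t = 0"
  proof (rule sigma_finite_measure.density_zero[OF sigma_finite_lborel g])
    fix A :: "real set" assume "A \<in> sets lborel"
    then have "A \<in> sets borel" by simp
    then show "(LINT t:A|lborel. g t) = 0"
    proof (induction rule: borel_set_induct)
      case empty
      then show ?case by (simp add: set_lebesgue_integral_def)
    next
      case (interval c d)
      show ?case by (rule g_Icc)
    next
      case (compl A)
      have "integrable lborel (\<lambda>t. indicator A t *\<^sub>R g t)"
        using compl(1) g by (intro integrable_mult_indicator) auto
      moreover have "(LINT t:-A|lborel. g t) = (LINT t|lborel. g t - indicator A t *\<^sub>R g t)"
        unfolding set_lebesgue_integral_def
        by (intro Bochner_Integration.integral_cong) (auto split: split_indicator)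
      ultimately show ?case
        using g total compl(2) by (simp add: set_lebesgue_integral_def)
    next
      case (union A)
      have "(LINT t:(\<Union>n. A n)|lborel. g t) = (\<Sum>n. (LINT t:A n|lborel. g t))"
      proof (rule lebesgue_integral_countable_add)
        show "\<And>m n. m \<noteq> n \<Longrightarrow> A m \<inter> A n = {}"
          using union(1) unfolding disjoint_family_on_def by auto
        have "(\<Union>n. A n) \<in> sets lborel" using union(2) by auto
        then show "set_integrable lborel (\<Union>n. A n) g"
          unfolding set_integrable_def using g by (intro integrable_mult_indicator) auto
      qed (use union in simp)
      then show ?case using union(3) by simp
    qed
  qed
  then show ?thesis
    by eventually_elim (simp add: g_def indicator_def)
qed

text \<open>If \<open>m\<close> decays at most at the rate \<open>m\<close> itself while positive, it cannot reach \<open>0\<close>: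
  at the first zero \<open>t\<^sub>1\<close>, the maximum \<open>M\<close> of \<open>m\<close> on \<open>[t\<^sub>1 - 1/2, t\<^sub>1]\<close> would
  satisfy \<open>0 \<ge> m t\<^sub>1 \<ge> M - M/2\<close>.\<close>
lemma positive_if_decay_rate_bounded:
  fixes m G :: "real \<Rightarrow> real"
  assumes cont: "continuous_on {0..T} m" and m0: "m 0 > 0"
    and G: "G integrable_on {0..T}"
    and incr: "\<And>s t. 0 \<le> s \<Longrightarrow> s \<le> t \<Longrightarrow> t \<le> T \<Longrightarrow> m t - m s = integral {s..t} G"
    and lower: "\<And>s. s \<in> {0..T} \<Longrightarrow> - max 0 (m s) \<le> G s"
    and t: "t \<in> {0..T}"
  shows "m t > 0"
proof (rule ccontr)
  define Z where "Z = {s \<in> {0..T}. m s \<le> 0}"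
  assume "\<not> m t > 0"
  then have "t \<in> Z" using t by (simp add: Z_def)
  moreover have "closed Z"
  proof -
    have "Z = {0..T} \<inter> m -` {..0}" by (auto simp: Z_def)
    then show ?thesis
      using continuous_closed_preimage[OF cont closed_atLeastAtMost closed_atMost] by simp
  qed
  moreover have bdd: "bdd_below Z" by (rule bdd_belowI[of _ 0]) (simp add: Z_def)
  ultimately have "Inf Z \<in> Z" by (intro closed_contains_Inf) auto
  then obtain t1 where t1: "t1 \<in> {0..T}" "m t1 \<le> 0" and first: "\<And>s. s \<in> Z \<Longrightarrow> t1 \<le> s"
    using bdd cInf_lower[of _ Z] by (metis (no_types, lifting) Z_def mem_Collect_eq)
  have before: "m s > 0" if "0 \<le> s" "s < t1" for s
    using first[of s] that t1 by (force simp: Z_def)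
  have "t1 > 0" using t1 m0 by (cases "t1 = 0") auto
  define s0 where "s0 = max 0 (t1 - 1/2)"
  have s0: "0 \<le> s0" "s0 < t1" "t1 - s0 \<le> 1/2" using \<open>t1 > 0\<close> unfolding s0_def by linarith+
  have "continuous_on {s0..t1} m" by (rule continuous_on_subset[OF cont]) (use s0 t1 in auto)
  then obtain t2 where t2: "t2 \<in> {s0..t1}" and max: "\<And>u. u \<in> {s0..t1} \<Longrightarrow> m u \<le> m t2"
    using continuous_attains_sup[of "{s0..t1}" m] s0 by fastforce
  have "m t2 > 0" using max[of s0] before[of s0] s0 by auto
  then have "t2 < t1" using t2 t1 by (cases "t2 = t1") auto
  have "integral {t2..t1} (\<lambda>_. - m t2) \<le> integral {t2..t1} G"
  proof (rule integral_le)
    show "G integrable_on {t2..t1}"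
      by (rule integrable_subinterval_real[OF G]) (use t1 t2 s0 in auto)
    show "- m t2 \<le> G u" if "u \<in> {t2..t1}" for u
      using lower[of u] max[of u] \<open>m t2 > 0\<close> that t1 t2 s0 by fastforce
  qed auto
  then have "- (t1 - t2) * m t2 \<le> m t1 - m t2"
    using incr[of t2 t1] \<open>t2 < t1\<close> t1 t2 s0 by (simp add: algebra_simps)
  moreover have "(t1 - t2) * m t2 \<le> (1/2) * m t2"
    using t2 s0 \<open>m t2 > 0\<close> by (intro mult_right_mono) auto
  ultimately show False using t1 \<open>m t2 > 0\<close> by linarith
qed

definition avg_pair :: "nat \<Rightarrow> nat \<Rightarrow> (nat \<Rightarrow> real) \<Rightarrow> nat \<Rightarrow> real" where
  "avg_pair i j v k = (if k = i \<or> k = j then (v i + v j) / 2 else v k)"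

lemma avg_pair_eq_self: "v i = v j \<Longrightarrow> avg_pair i j v = v"
  by (auto simp: avg_pair_def fun_eq_iff)

lemma sum_split_pair:
  assumes "finite A" "i \<in> A" "j \<in> A" "i \<noteq> j"
  shows "sum f A = f i + f j + sum f (A - {i, j})"
  using assms sum.remove[of A i f] sum.remove[of "A - {i}" j f]
  by (simp add: insert_commute set_diff_eq add.assoc)

lemma sum_avg_pair:
  assumes "finite A" "i \<in> A" "j \<in> A"
  shows "(\<Sum>k\<in>A. avg_pair i j v k) = (\<Sum>k\<in>A. v k)"
proof (cases "i = j")
  case False
  have "(\<Sum>k\<in>A - {i, j}. avg_pair i j v k) = (\<Sum>k\<in>A - {i, j}. v k)"
    by (rule sum.cong) (auto simp: avg_pair_def)
  moreover have "avg_pair i j v i + avg_pair i j v j = v i + v j"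
    by (simp add: avg_pair_def)
  ultimately show ?thesis
    using sum_split_pair[OF assms False, of "avg_pair i j v"] sum_split_pair[OF assms False, of v]
    by simp
qed (simp add: avg_pair_eq_self)

lemma sum_power2_avg_pair:
  assumes "finite A" "i \<in> A" "j \<in> A"
  shows "(\<Sum>k\<in>A. (avg_pair i j v k)\<^sup>2) = (\<Sum>k\<in>A. (v k)\<^sup>2) - (v i - v j)\<^sup>2 / 2"
proof (cases "i = j")
  case False
  have "(\<Sum>k\<in>A - {i, j}. (avg_pair i j v k)\<^sup>2) = (\<Sum>k\<in>A - {i, j}. (v k)\<^sup>2)"
    by (rule sum.cong) (auto simp: avg_pair_def)
  moreover have "(avg_pair i j v i)\<^sup>2 + (avg_pair i j v j)\<^sup>2 = (v i)\<^sup>2 + (v j)\<^sup>2 - (v i - v j)\<^sup>2 / 2"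
    by (simp add: avg_pair_def power2_eq_square field_simps)
  ultimately show ?thesis
    using sum_split_pair[OF assms False, of "\<lambda>k. (avg_pair i j v k)\<^sup>2"]
      sum_split_pair[OF assms False, of "\<lambda>k. (v k)\<^sup>2"]
    by simp
qed (simp add: avg_pair_eq_self)

lemma mean_avg_pair: "i \<in> {1..N} \<Longrightarrow> j \<in> {1..N} \<Longrightarrow> mean N (avg_pair i j v) = mean N v"
  by (simp add: mean_def sum_avg_pair)

lemma Vfun_avg_pair:
  "i \<in> {1..N} \<Longrightarrow> j \<in> {1..N} \<Longrightarrow> Vfun N (avg_pair i j v) = Vfun N v - (v i - v j)\<^sup>2 / (2 * real N)"
  by (simp add: Vfun_def sum_power2_avg_pair right_diff_distrib)

lemma integrable_avg_pair:
  assumes "(\<lambda>s. f s i) integrable_on S" "(\<lambda>s. f s j) integrable_on S" "(\<lambda>s. f s k) integrable_on S"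
  shows "(\<lambda>s. avg_pair i j (f s) k) integrable_on S"
  using assms by (cases "k = i \<or> k = j") (simp_all add: avg_pair_def integrable_add)

lemma integral_avg_pair:
  assumes "(\<lambda>s. f s i) integrable_on S" "(\<lambda>s. f s j) integrable_on S"
  shows "integral S (\<lambda>s. avg_pair i j (f s) k) = avg_pair i j (\<lambda>l. integral S (\<lambda>s. f s l)) k"
  using assms by (simp add: avg_pair_def Henstock_Kurzweil_Integration.integral_add)

definition merge_from :: "real \<Rightarrow> nat \<Rightarrow> nat \<Rightarrow> (real \<Rightarrow> nat \<Rightarrow> real) \<Rightarrow> real \<Rightarrow> nat \<Rightarrow> real" where
  "merge_from \<tau> i j f t k = (if \<tau> \<le> t then avg_pair i j (f t) k else f t k)"

lemma admissible_merge_from: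
  assumes adm: "admissible N T \<alpha>" and ij: "i \<in> {1..N}" "j \<in> {1..N}"
  shows "admissible N T (merge_from \<tau> i j \<alpha>)"
  unfolding admissible_def
proof (intro conjI ballI)
  fix k assume k: "k \<in> {1..N}"
  have [measurable]: "(\<lambda>t. \<alpha> t l) \<in> borel_measurable (restrict_space lborel {0..T})" if "l \<in> {1..N}" for l
    using adm that by (simp add: admissible_def)
  note this[OF ij(1), measurable] this[OF ij(2), measurable] this[OF k, measurable]
  show "(\<lambda>t. merge_from \<tau> i j \<alpha> t k) \<in> borel_measurable (restrict_space lborel {0..T})"
    unfolding merge_from_def
  proof (rule measurable_If)
    show "(\<lambda>t. avg_pair i j (\<alpha> t) k) \<in> borel_measurable (restrict_space lborel {0..T})"
      unfolding avg_pair_def by measurable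
    show "{t \<in> space (restrict_space lborel {0..T}). \<tau> \<le> t} \<in> sets (restrict_space lborel {0..T})"
      by (auto simp: sets_restrict_space_iff space_restrict_space)
  qed measurable
next
  fix t k assume t: "t \<in> {0..T}" and k: "k \<in> {1..N}"
  have "0 \<le> \<alpha> t l \<and> \<alpha> t l \<le> 1" if "l \<in> {1..N}" for l
    using adm t that by (simp add: admissible_def)
  from this[OF ij(1)] this[OF ij(2)] this[OF k]
  show "0 \<le> merge_from \<tau> i j \<alpha> t k" "merge_from \<tau> i j \<alpha> t k \<le> 1"
    by (auto simp: merge_from_def avg_pair_def)
next
  fix t assume "t \<in> {0..T}"
  moreover have "(\<Sum>k=1..N. merge_from \<tau> i j \<alpha> t k) = (\<Sum>k=1..N. \<alpha> t k)"
    using ij by (cases "\<tau> \<le> t") (simp_all add: merge_from_def sum_avg_pair)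
  ultimately show "(\<Sum>k=1..N. merge_from \<tau> i j \<alpha> t k) \<le> 1"
    using adm by (simp add: admissible_def)
qed

definition drift :: "nat \<Rightarrow> (real \<Rightarrow> nat \<Rightarrow> real) \<Rightarrow> (real \<Rightarrow> nat \<Rightarrow> real) \<Rightarrow> real \<Rightarrow> nat \<Rightarrow> real" where
  "drift N \<beta> y s k = - y s k + (1 - \<beta> s k) * mean N (y s)"

lemma continuous_on_mean:
  "(\<forall>k\<in>{1..N}. continuous_on S (\<lambda>t. y t k)) \<Longrightarrow> continuous_on S (\<lambda>t. mean N (y t))"
  unfolding mean_def by (intro continuous_intros) auto

lemma drift_set_integrable:
  assumes adm: "admissible N T \<beta>" and cont: "\<forall>k\<in>{1..N}. continuous_on {0..T} (\<lambda>t. y t k)"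
    and k: "k \<in> {1..N}"
  shows "set_integrable lborel {0..T} (\<lambda>s. drift N \<beta> y s k)"
proof -
  have yk: "continuous_on {0..T} (\<lambda>t. y t k)" and m: "continuous_on {0..T} (\<lambda>t. mean N (y t))"
    using cont k continuous_on_mean[of N "{0..T}" y] by auto
  obtain B1 where B1: "\<forall>t\<in>{0..T}. \<bar>y t k\<bar> \<le> B1"
    using compact_imp_bounded[OF compact_continuous_image[OF yk compact_Icc]]
    by (auto simp: bounded_real)
  obtain B2 where B2: "\<forall>t\<in>{0..T}. \<bar>mean N (y t)\<bar> \<le> B2"
    using compact_imp_bounded[OF compact_continuous_image[OF m compact_Icc]]
    by (auto simp: bounded_real)
  have [measurable]: "(\<lambda>t. y t k) \<in> borel_measurable (restrict_space lborel {0..T})"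
    "(\<lambda>t. mean N (y t)) \<in> borel_measurable (restrict_space lborel {0..T})"
    "(\<lambda>t. \<beta> t k) \<in> borel_measurable (restrict_space lborel {0..T})"
    using borel_measurable_continuous_on_restrict[OF yk] borel_measurable_continuous_on_restrict[OF m]
      adm k by (simp_all add: admissible_def cong: measurable_cong_sets)
  show ?thesis
  proof (rule set_integrable_bounded_Icc)
    show "(\<lambda>s. drift N \<beta> y s k) \<in> borel_measurable (restrict_space lborel {0..T})"
      unfolding drift_def by measurable
    fix t assume t: "t \<in> {0..T}"
    have "0 \<le> \<beta> t k" "\<beta> t k \<le> 1" using adm k t by (auto simp: admissible_def)
    then have "\<bar>(1 - \<beta> t k) * mean N (y t)\<bar> \<le> 1 * B2"
      unfolding abs_mult using B2 t by (intro mult_mono) auto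
    moreover have "\<bar>y t k\<bar> \<le> B1" using B1 t by blast
    ultimately show "\<bar>drift N \<beta> y t k\<bar> \<le> B1 + B2"
      unfolding drift_def by linarith
  qed
qed

lemma trajectory_continuous_on:
  "trajectory N T \<beta> \<xi>0 y \<Longrightarrow> \<forall>k\<in>{1..N}. continuous_on {0..T} (\<lambda>t. y t k)"
  by (simp add: trajectory_def)

lemma drift_integrable_on:
  assumes "admissible N T \<beta>" "\<forall>k\<in>{1..N}. continuous_on {0..T} (\<lambda>t. y t k)" "k \<in> {1..N}"
  shows "(\<lambda>s. drift N \<beta> y s k) integrable_on {0..T}"
  using set_borel_integral_eq_integral(1)[OF drift_set_integrable[OF assms]] .

lemma trajectory_iff_integral_equation:
  assumes adm: "admissible N T \<beta>" and cont: "\<forall>k\<in>{1..N}. continuous_on {0..T} (\<lambda>t. y t k)"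
  shows "trajectory N T \<beta> \<xi>0 y \<longleftrightarrow>
    (\<forall>k\<in>{1..N}. \<forall>t\<in>{0..T}. y t k = \<xi>0 k + integral {0..t} (\<lambda>s. drift N \<beta> y s k))"
proof -
  have "(LBINT s:{0..t}. drift N \<beta> y s k) = integral {0..t} (\<lambda>s. drift N \<beta> y s k)"
    if "k \<in> {1..N}" "t \<in> {0..T}" for k t
    using that by (intro set_borel_integral_eq_integral(2) set_integrable_subset[OF
        drift_set_integrable[OF adm cont]]) auto
  then show ?thesis
    using cont by (auto simp: trajectory_def drift_def)
qed

lemma trajectory_increment:
  assumes adm: "admissible N T \<beta>" and tr: "trajectory N T \<beta> \<xi>0 y" and k: "k \<in> {1..N}"
    and st: "0 \<le> s" "s \<le> t" "t \<le> T"
  shows "y t k - y s k = integral {s..t} (\<lambda>r. drift N \<beta> y r k)"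
proof -
  have cont: "\<forall>k\<in>{1..N}. continuous_on {0..T} (\<lambda>t. y t k)"
    using tr by (rule trajectory_continuous_on)
  have eq: "\<And>t. t \<in> {0..T} \<Longrightarrow> y t k = \<xi>0 k + integral {0..t} (\<lambda>s. drift N \<beta> y s k)"
    using tr k trajectory_iff_integral_equation[OF adm cont] by blast
  have "(\<lambda>r. drift N \<beta> y r k) integrable_on {0..t}"
    by (rule integrable_subinterval_real[OF drift_integrable_on[OF adm cont k]]) (use st in auto)
  then have "integral {0..s} (\<lambda>r. drift N \<beta> y r k) + integral {s..t} (\<lambda>r. drift N \<beta> y r k)
      = integral {0..t} (\<lambda>r. drift N \<beta> y r k)"
    using st by (intro Henstock_Kurzweil_Integration.integral_combine) auto
  then show ?thesis
    using eq[of s] eq[of t] st by simp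
qed

lemma mean_drift:
  assumes "N \<ge> 1"
  shows "mean N (drift N \<beta> y s) = - ((\<Sum>k=1..N. \<beta> s k) / real N) * mean N (y s)"
proof -
  have "(\<Sum>k=1..N. drift N \<beta> y s k)
      = - (\<Sum>k=1..N. y s k) + (real N - (\<Sum>k=1..N. \<beta> s k)) * mean N (y s)"
    by (simp add: drift_def sum.distrib sum_negf sum_subtractf flip: sum_distrib_right)
  also have "(\<Sum>k=1..N. y s k) = real N * mean N (y s)"
    using assms by (simp add: mean_def)
  finally show ?thesis
    using assms by (simp add: mean_def field_simps)
qed

lemma mean_trajectory_positive:
  assumes N: "N \<ge> 1" and adm: "admissible N T \<beta>" and tr: "trajectory N T \<beta> \<xi>0 y"
    and pos: "mean N \<xi>0 > 0" and t: "t \<in> {0..T}"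
  shows "mean N (y t) > 0"
proof -
  have cont: "\<forall>k\<in>{1..N}. continuous_on {0..T} (\<lambda>t. y t k)"
    using tr by (rule trajectory_continuous_on)
  have int: "\<And>k. k \<in> {1..N} \<Longrightarrow> (\<lambda>s. drift N \<beta> y s k) integrable_on {0..T}"
    by (rule drift_integrable_on[OF adm cont])
  have "\<forall>k\<in>{1..N}. y 0 k = \<xi>0 k"
    using tr t trajectory_iff_integral_equation[OF adm cont] by auto
  then have y0: "mean N (y 0) = mean N \<xi>0"
    by (simp add: mean_def)
  show ?thesis
  proof (rule positive_if_decay_rate_bounded[where m="\<lambda>t. mean N (y t)" and G="\<lambda>s. mean N (drift N \<beta> y s)"])
    show "continuous_on {0..T} (\<lambda>t. mean N (y t))"
      by (rule continuous_on_mean[OF cont])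
    have sum_int: "(\<lambda>s. \<Sum>k=1..N. drift N \<beta> y s k) integrable_on {0..T}"
      by (rule integrable_sum) (use int in auto)
    show "(\<lambda>s. mean N (drift N \<beta> y s)) integrable_on {0..T}"
      using integrable_on_cmult_left[OF sum_int, of "1 / real N"] unfolding mean_def by simp
    show "mean N (y t) - mean N (y s) = integral {s..t} (\<lambda>r. mean N (drift N \<beta> y r))"
      if "0 \<le> s" "s \<le> t" "t \<le> T" for s t
    proof -
      have "\<And>k. k \<in> {1..N} \<Longrightarrow> (\<lambda>r. drift N \<beta> y r k) integrable_on {s..t}"
        using that by (intro integrable_subinterval_real[OF int]) auto
      then have "integral {s..t} (\<lambda>r. \<Sum>k=1..N. drift N \<beta> y r k)
          = (\<Sum>k=1..N. integral {s..t} (\<lambda>r. drift N \<beta> y r k))"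
        by (intro integral_sum) auto
      then have "integral {s..t} (\<lambda>r. mean N (drift N \<beta> y r))
          = (\<Sum>k=1..N. integral {s..t} (\<lambda>r. drift N \<beta> y r k)) / real N"
        by (simp add: mean_def)
      also have "\<dots> = (\<Sum>k=1..N. y t k - y s k) / real N"
        using trajectory_increment[OF adm tr _ that] by simp
      finally show ?thesis
        by (simp add: mean_def sum_subtractf diff_divide_distrib)
    qed
    show "- max 0 (mean N (y s)) \<le> mean N (drift N \<beta> y s)" if "s \<in> {0..T}" for s
    proof -
      define a where "a = (\<Sum>k=1..N. \<beta> s k) / real N"
      have "0 \<le> (\<Sum>k=1..N. \<beta> s k)" "(\<Sum>k=1..N. \<beta> s k) \<le> 1"
        using adm that by (auto simp: admissible_def intro: sum_nonneg)
      then have "0 \<le> a" "a \<le> 1"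
        using N by (auto simp: a_def field_simps)
      then have "a * mean N (y s) \<le> max 0 (mean N (y s))"
        by (cases "mean N (y s) \<ge> 0") (auto intro: mult_left_le_one_le mult_nonneg_nonpos)
      then show ?thesis
        by (simp add: mean_drift[OF N] a_def)
    qed
  qed (use pos y0 t in auto)
qed

lemma merge_from_apply: "merge_from \<tau> i j f t = (if \<tau> \<le> t then avg_pair i j (f t) else f t)"
  by (simp add: fun_eq_iff merge_from_def)

lemma drift_merge_from:
  assumes "i \<in> {1..N}" "j \<in> {1..N}"
  shows "drift N (merge_from \<tau> i j \<beta>) (merge_from \<tau> i j y) = merge_from \<tau> i j (drift N \<beta> y)"
proof (intro ext)
  fix s k
  have "mean N (merge_from \<tau> i j y s) = mean N (y s)"
    using assms by (simp add: merge_from_apply mean_avg_pair)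
  then show "drift N (merge_from \<tau> i j \<beta>) (merge_from \<tau> i j y) s k = merge_from \<tau> i j (drift N \<beta> y) s k"
    by (simp add: drift_def merge_from_def avg_pair_def field_simps)
qed

lemma trajectory_merge_from:
  assumes adm: "admissible N T \<beta>" and tr: "trajectory N T \<beta> \<xi>0 y"
    and ij: "i \<in> {1..N}" "j \<in> {1..N}" and \<tau>: "\<tau> \<in> {0..T}" and meet: "y \<tau> i = y \<tau> j"
  shows "trajectory N T (merge_from \<tau> i j \<beta>) \<xi>0 (merge_from \<tau> i j y)"
proof -
  have cont: "\<forall>k\<in>{1..N}. continuous_on {0..T} (\<lambda>t. y t k)"
    using tr by (rule trajectory_continuous_on)
  have eq: "\<And>k t. k \<in> {1..N} \<Longrightarrow> t \<in> {0..T} \<Longrightarrow> y t k = \<xi>0 k + integral {0..t} (\<lambda>s. drift N \<beta> y s k)"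
    using tr trajectory_iff_integral_equation[OF adm cont] by blast
  have int: "\<And>k. k \<in> {1..N} \<Longrightarrow> (\<lambda>s. drift N \<beta> y s k) integrable_on {0..T}"
    by (rule drift_integrable_on[OF adm cont])
  have meet_k: "y \<tau> k = avg_pair i j (y \<tau>) k" for k
    using meet by (simp add: avg_pair_eq_self)
  have merged_cont: "\<forall>k\<in>{1..N}. continuous_on {0..T} (\<lambda>t. merge_from \<tau> i j y t k)"
  proof
    fix k assume k: "k \<in> {1..N}"
    have "continuous_on {0..T} (\<lambda>t. avg_pair i j (y t) k)"
      using cont ij k unfolding avg_pair_def
      by (cases "k = i \<or> k = j") (auto intro!: continuous_intros)
    then show "continuous_on {0..T} (\<lambda>t. merge_from \<tau> i j y t k)"
      unfolding merge_from_def using cont k meet_k by (intro continuous_on_if_ge) auto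
  qed
  have "merge_from \<tau> i j y t k = \<xi>0 k + integral {0..t} (\<lambda>s. merge_from \<tau> i j (drift N \<beta> y) s k)"
    if k: "k \<in> {1..N}" and t: "t \<in> {0..T}" for k t
    unfolding merge_from_def
  proof (rule integral_equation_glue[where u="\<lambda>t. y t k" and w="\<lambda>t. avg_pair i j (y t) k"
        and b="avg_pair i j \<xi>0 k", OF int[OF k]
        integrable_avg_pair[OF int[OF ij(1)] int[OF ij(2)] int[OF k]] eq[OF k] _ \<tau> meet_k t])
    fix t assume t: "t \<in> {0..T}"
    have "\<And>l. l \<in> {1..N} \<Longrightarrow> (\<lambda>s. drift N \<beta> y s l) integrable_on {0..t}"
      using t by (intro integrable_subinterval_real[OF int]) auto
    then have "integral {0..t} (\<lambda>s. avg_pair i j (drift N \<beta> y s) k)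
        = avg_pair i j (\<lambda>l. integral {0..t} (\<lambda>s. drift N \<beta> y s l)) k"
      using ij by (intro integral_avg_pair) auto
    then show "avg_pair i j (y t) k = avg_pair i j \<xi>0 k + integral {0..t} (\<lambda>s. avg_pair i j (drift N \<beta> y s) k)"
      using eq[OF ij(1) t] eq[OF ij(2) t] eq[OF k t] by (simp add: avg_pair_def field_simps)
  qed
  then show ?thesis
    using trajectory_iff_integral_equation[OF admissible_merge_from[OF adm ij] merged_cont]
    by (simp add: drift_merge_from[OF ij])
qed

lemma continuous_on_Vfun:
  "(\<forall>k\<in>{1..N}. continuous_on S (\<lambda>t. y t k)) \<Longrightarrow> continuous_on S (\<lambda>t. Vfun N (y t))"
  unfolding Vfun_def by (intro continuous_intros) auto

lemma cost_eq_integral: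
  "(\<forall>k\<in>{1..N}. continuous_on {0..T} (\<lambda>t. y t k)) \<Longrightarrow>
    cost N T y = integral {0..T} (\<lambda>t. Vfun N (y t))"
  unfolding cost_def
  by (rule set_borel_integral_eq_integral(2)[OF borel_integrable_atLeastAtMost'[OF continuous_on_Vfun]])

lemma optimal_state_coincide_after:
  assumes T: "T > 0" and opt: "optimal_control N T \<xi>0 \<alpha> x"
    and \<tau>: "\<tau> \<in> {0..T}" and ij: "i \<in> {1..N}" "j \<in> {1..N}" and meet: "x \<tau> i = x \<tau> j"
    and t: "t \<in> {\<tau>..T}"
  shows "x t i = x t j"
proof -
  let ?y = "merge_from \<tau> i j x"
  have adm: "admissible N T \<alpha>" and tr: "trajectory N T \<alpha> \<xi>0 x"
    and min: "\<And>\<beta> y. admissible N T \<beta> \<Longrightarrow> trajectory N T \<beta> \<xi>0 y \<Longrightarrow> cost N T x \<le> cost N T y"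
    using opt by (auto simp: optimal_control_def)
  have tr_y: "trajectory N T (merge_from \<tau> i j \<alpha>) \<xi>0 ?y"
    by (rule trajectory_merge_from[OF adm tr ij \<tau> meet])
  have le: "cost N T x \<le> cost N T ?y"
    by (rule min[OF admissible_merge_from[OF adm ij] tr_y])
  define D where "D t = Vfun N (x t) - Vfun N (?y t)" for t
  have D: "D t = (if \<tau> \<le> t then (x t i - x t j)\<^sup>2 / (2 * real N) else 0)" for t
    using ij by (simp add: D_def merge_from_apply Vfun_avg_pair)
  have cont_x: "\<forall>k\<in>{1..N}. continuous_on {0..T} (\<lambda>t. x t k)"
    using tr by (rule trajectory_continuous_on)
  have cont_y: "\<forall>k\<in>{1..N}. continuous_on {0..T} (\<lambda>t. ?y t k)"
    using tr_y by (rule trajectory_continuous_on)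
  have cont_D: "continuous_on {0..T} D"
    unfolding D_def by (intro continuous_intros continuous_on_Vfun cont_x cont_y)
  have Vx: "(\<lambda>t. Vfun N (x t)) integrable_on {0..T}"
    by (intro integrable_continuous_interval continuous_on_Vfun cont_x)
  have "cost N T ?y = integral {0..T} (\<lambda>t. Vfun N (?y t))"
    using cont_y by (rule cost_eq_integral)
  also have "\<dots> = integral {0..T} (\<lambda>t. Vfun N (x t) - D t)"
    by (simp add: D_def)
  also have "\<dots> = cost N T x - integral {0..T} D"
    using Vx integrable_continuous_interval[OF cont_D]
    by (simp add: cost_eq_integral[OF cont_x] Henstock_Kurzweil_Integration.integral_diff)
  finally have "cost N T ?y = cost N T x - integral {0..T} D" .
  with le have "integral {0..T} D \<le> 0" by simp
  moreover have "integral {0..T} D \<ge> 0"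
    by (rule integral_nonneg[OF integrable_continuous_interval[OF cont_D]]) (simp add: D)
  ultimately have "\<forall>t\<in>{0..T}. D t = 0"
    using integral_eq_0_iff[OF cont_D T] by (simp add: D)
  then have "D t = 0"
    using t \<tau> by auto
  then show ?thesis
    using t ij by (simp add: D)
qed

lemma optimal_control_coincide_after:
  assumes N: "N \<ge> 1" and opt: "optimal_control N T \<xi>0 \<alpha> x" and pos: "mean N \<xi>0 > 0"
    and \<tau>: "\<tau> \<in> {0..T}" and ij: "i \<in> {1..N}" "j \<in> {1..N}"
    and same: "\<forall>t\<in>{\<tau>..T}. x t i = x t j"
  shows "AE t in lborel. t \<in> {\<tau>..T} \<longrightarrow> \<alpha> t i = \<alpha> t j"
proof -
  have adm: "admissible N T \<alpha>" and tr: "trajectory N T \<alpha> \<xi>0 x"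
    using opt by (auto simp: optimal_control_def)
  have cont: "\<forall>k\<in>{1..N}. continuous_on {0..T} (\<lambda>t. x t k)"
    using tr by (rule trajectory_continuous_on)
  define H where "H s = drift N \<alpha> x s j - drift N \<alpha> x s i" for s
  have "set_integrable lborel {0..T} H"
    unfolding H_def[abs_def] by (intro set_integral_diff(1) drift_set_integrable[OF adm cont] ij)
  then have H_int: "set_integrable lborel {\<tau>..T} H"
    by (rule set_integrable_subset) (use \<tau> in auto)
  have "integral {c..d} H = 0" if "\<tau> \<le> c" "c \<le> d" "d \<le> T" for c d
  proof -
    have "\<And>k. k \<in> {1..N} \<Longrightarrow> (\<lambda>s. drift N \<alpha> x s k) integrable_on {c..d}"
      using that \<tau> by (intro integrable_subinterval_real[OF drift_integrable_on[OF adm cont]]) auto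
    then have "integral {c..d} H = (x d j - x c j) - (x d i - x c i)"
      using trajectory_increment[OF adm tr _ _ that(2,3)] that \<tau> ij
      by (simp add: H_def[abs_def] Henstock_Kurzweil_Integration.integral_diff)
    then show ?thesis
      using same that \<tau> by simp
  qed
  then have "AE s in lborel. s \<in> {\<tau>..T} \<longrightarrow> H s = 0"
    by (intro AE_zero_if_interval_integrals_zero[OF H_int]) auto
  then show ?thesis
  proof eventually_elim
    case (elim s)
    show ?case
    proof
      assume s: "s \<in> {\<tau>..T}"
      then have "H s = (\<alpha> s i - \<alpha> s j) * mean N (x s)"
        using same by (simp add: H_def drift_def algebra_simps)
      moreover have "mean N (x s) > 0"
        using s \<tau> by (intro mean_trajectory_positive[OF N adm tr pos]) auto
      ultimately show "\<alpha> s i = \<alpha> s j"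
        using elim s by simp
    qed
  qed
qed

theorem proposition10:
  fixes N :: nat and T \<tau> :: real and \<xi>0 :: "nat \<Rightarrow> real"
    and \<alpha> x :: "real \<Rightarrow> nat \<Rightarrow> real" and i j :: nat
  assumes "N \<ge> 1" and "T > 0"
    and "optimal_control N T \<xi>0 \<alpha> x"
    and "mean N \<xi>0 > 0"
    and "\<forall>k\<in>{1..N}. \<forall>l\<in>{1..N}. k \<le> l \<longrightarrow> \<xi>0 k \<ge> \<xi>0 l"
    and "\<tau> \<in> {0..T}" and "i \<in> {1..N}" and "j \<in> {1..N}"
    and "x \<tau> i = x \<tau> j"
  shows "(\<forall>t\<in>{\<tau>..T}. x t i = x t j) \<and>
         (AE t in lborel. t \<in> {\<tau>..T} \<longrightarrow> \<alpha> t i = \<alpha> t j)"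
proof
  show same: "\<forall>t\<in>{\<tau>..T}. x t i = x t j"
    using optimal_state_coincide_after[OF assms(2,3,6,7,8,9)] by blast
  show "AE t in lborel. t \<in> {\<tau>..T} \<longrightarrow> \<alpha> t i = \<alpha> t j"
    by (rule optimal_control_coincide_after[OF assms(1,3,4,6,7,8) same])
qed

end
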